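(* Let $R$ be a $d$-variate tail copula, $d\ge2$, whose (right-hand) partial derivatives exist, and write $R(x,y)=R(x,y,\infty,\ldots,\infty)$ for its bivariate margin in the first two coordinates. For $g>0$ and $(x,y,\mathbf{z})\in[0,\infty)\times[0,\infty)\times[0,\infty)^{d-2}$, $$0\le\dot R_1(x,y+g,\mathbf{z})-\dot R_1(x,y,\mathbf{z})\le\dot R_1(x,y+g)-\dot R_1(x,y),$$ where $\dot R_1$ denotes the right-hand partial derivative with respect to the first argument (of the $d$-variate, respectively bivariate, function).
   Context: A $d$-variate tail copula is a function $R:[0,\infty)^d\to[0,\infty)$ with $R(\mathbf{x})=\lim_{s\downarrow0}s^{-1}\mathbb{P}\{V_1\le sx_1,\ldots,V_d\le sx_d\}$ for a random vector with uniform $(0,1)$ margins (the limit existing for all $\mathbf{x}$); it extends to arguments with some coordinates equal to $+\infty$ (not all) by dropping the corresponding events, i.e. $R(x,y,\infty,\ldots,\infty)=\lim_{s\downarrow0}s^{-1}\mathbb{P}\{V_1\le sx,V_2\le sy\}$. *)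

theory Defs
  imports "HOL-Probability.Probability"
begin

text \<open>Points of [0,oo)^d are represented as functions nat => real; only the
coordinates 0..d-1 are relevant (coordinate 0 is the first, 1 the second).\<close>

definition nonneg_point :: "nat \<Rightarrow> (nat \<Rightarrow> real) \<Rightarrow> bool" where
  "nonneg_point d w \<longleftrightarrow> (\<forall>i<d. 0 \<le> w i)"

definition has_rpartial :: "((nat \<Rightarrow> real) \<Rightarrow> real) \<Rightarrow> nat \<Rightarrow> (nat \<Rightarrow> real) \<Rightarrow> bool" where
  "has_rpartial R i w \<longleftrightarrow>
     (\<exists>D. ((\<lambda>h. (R (w(i := w i + h)) - R w) / h) \<longlongrightarrow> D) (at_right 0))"

definition rpartial :: "((nat \<Rightarrow> real) \<Rightarrow> real) \<Rightarrow> nat \<Rightarrow> (nat \<Rightarrow> real) \<Rightarrow> real" where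
  "rpartial R i w = Lim (at_right 0) (\<lambda>h. (R (w(i := w i + h)) - R w) / h)"

definition uniform_margins :: "'a measure \<Rightarrow> nat \<Rightarrow> (nat \<Rightarrow> 'a \<Rightarrow> real) \<Rightarrow> bool" where
  "uniform_margins M d V \<longleftrightarrow>
     (\<forall>i<d. V i \<in> borel_measurable M \<and>
        (\<forall>t\<in>{0..1}. measure M {\<omega> \<in> space M. V i \<omega> \<le> t} = t))"

definition is_tail_copula_of :: "'a measure \<Rightarrow> nat \<Rightarrow> (nat \<Rightarrow> 'a \<Rightarrow> real) \<Rightarrow> ((nat \<Rightarrow> real) \<Rightarrow> real) \<Rightarrow> bool" where
  "is_tail_copula_of M d V R \<longleftrightarrow>
     (\<forall>w. nonneg_point d w \<longrightarrow>
        ((\<lambda>s. measure M {\<omega> \<in> space M. \<forall>i<d. V i \<omega> \<le> s * w i} / s) \<longlongrightarrow> R w) (at_right 0))"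

text \<open>R2 is the bivariate margin R(x,y,oo,...,oo) in the first two coordinates.\<close>

definition is_biv_margin_of :: "'a measure \<Rightarrow> (nat \<Rightarrow> 'a \<Rightarrow> real) \<Rightarrow> (real \<Rightarrow> real \<Rightarrow> real) \<Rightarrow> bool" where
  "is_biv_margin_of M V R2 \<longleftrightarrow>
     (\<forall>x y. 0 \<le> x \<longrightarrow> 0 \<le> y \<longrightarrow>
        ((\<lambda>s. measure M {\<omega> \<in> space M. V 0 \<omega> \<le> s * x \<and> V 1 \<omega> \<le> s * y} / s) \<longlongrightarrow> R2 x y) (at_right 0))"

end

theory Submission
  imports Defs
begin

text \<open>Before the limit s \<rightarrow> 0, the tail copula is P{V \<le> s (x,y,z)} / s, and the volume it assigns
  to a rectangle in the first two coordinates is, up to the factor 1/s, the probability that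
  (V 0, V 1) falls into the scaled rectangle while the remaining coordinates satisfy V i \<le> s z i.
  Dropping the latter event gives the corresponding volume of the bivariate margin, so the
  rectangle volumes satisfy 0 \<le> vol R \<le> vol R2 in the limit. For the rectangle
  [x, x + h] \<times> [y, y + g], dividing by h and letting h \<rightarrow> 0 yields the claim.\<close>

definition rect_volume :: "(real \<Rightarrow> real \<Rightarrow> real) \<Rightarrow> real \<Rightarrow> real \<Rightarrow> real \<Rightarrow> real \<Rightarrow> real" where
  "rect_volume F a a' b b' = F a' b' - F a b' - (F a' b - F a b)"

lemma measure_Collect_le_diff:
  fixes f :: "'a \<Rightarrow> real"
  assumes "finite_measure M" and "c \<le> c'" and "f \<in> borel_measurable M"
    and "{\<omega>\<in>space M. P \<omega>} \<in> sets M"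
  shows "measure M {\<omega>\<in>space M. P \<omega> \<and> f \<omega> \<le> c'} - measure M {\<omega>\<in>space M. P \<omega> \<and> f \<omega> \<le> c}
       = measure M {\<omega>\<in>space M. P \<omega> \<and> c < f \<omega> \<and> f \<omega> \<le> c'}"
proof -
  interpret finite_measure M by fact
  have meas: "{\<omega>\<in>space M. P \<omega> \<and> f \<omega> \<le> t} \<in> sets M" for t
    using assms(3,4) by measurable
  have strip: "{\<omega>\<in>space M. P \<omega> \<and> c < f \<omega> \<and> f \<omega> \<le> c'}
      = {\<omega>\<in>space M. P \<omega> \<and> f \<omega> \<le> c'} - {\<omega>\<in>space M. P \<omega> \<and> f \<omega> \<le> c}"
    by auto
  have "{\<omega>\<in>space M. P \<omega> \<and> f \<omega> \<le> c} \<subseteq> {\<omega>\<in>space M. P \<omega> \<and> f \<omega> \<le> c'}"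
    using assms(2) by auto
  then show ?thesis
    unfolding strip by (rule finite_measure_Diff[OF meas meas, symmetric])
qed

lemma rect_volume_measure:
  fixes f g :: "'a \<Rightarrow> real"
  assumes "finite_measure M" and "a \<le> a'" and "b \<le> b'"
    and "f \<in> borel_measurable M" and "g \<in> borel_measurable M"
    and "{\<omega>\<in>space M. P \<omega>} \<in> sets M"
  shows "rect_volume (\<lambda>a b. measure M {\<omega>\<in>space M. P \<omega> \<and> f \<omega> \<le> a \<and> g \<omega> \<le> b}) a a' b b'
       = measure M {\<omega>\<in>space M. P \<omega> \<and> a < f \<omega> \<and> f \<omega> \<le> a' \<and> b < g \<omega> \<and> g \<omega> \<le> b'}"
proof -
  have g_le: "{\<omega>\<in>space M. P \<omega> \<and> g \<omega> \<le> t} \<in> sets M" for t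
    using assms(5,6) by measurable
  have f_strip: "{\<omega>\<in>space M. P \<omega> \<and> a < f \<omega> \<and> f \<omega> \<le> a'} \<in> sets M"
    using assms(4,6) by measurable
  have f_diff: "measure M {\<omega>\<in>space M. P \<omega> \<and> f \<omega> \<le> a' \<and> g \<omega> \<le> t}
      - measure M {\<omega>\<in>space M. P \<omega> \<and> f \<omega> \<le> a \<and> g \<omega> \<le> t}
      = measure M {\<omega>\<in>space M. P \<omega> \<and> a < f \<omega> \<and> f \<omega> \<le> a' \<and> g \<omega> \<le> t}" for t
    using measure_Collect_le_diff[OF assms(1,2,4) g_le[of t]] by (simp add: conj_commute conj_left_commute)
  have g_diff: "measure M {\<omega>\<in>space M. P \<omega> \<and> a < f \<omega> \<and> f \<omega> \<le> a' \<and> g \<omega> \<le> b'}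
      - measure M {\<omega>\<in>space M. P \<omega> \<and> a < f \<omega> \<and> f \<omega> \<le> a' \<and> g \<omega> \<le> b}
      = measure M {\<omega>\<in>space M. P \<omega> \<and> a < f \<omega> \<and> f \<omega> \<le> a' \<and> b < g \<omega> \<and> g \<omega> \<le> b'}"
    using measure_Collect_le_diff[OF assms(1,3,5) f_strip] by (simp add: conj_commute conj_left_commute)
  show ?thesis
    unfolding rect_volume_def f_diff g_diff ..
qed

lemma rect_volume_measure_scaled:
  fixes f g :: "'a \<Rightarrow> real"
  assumes "finite_measure M" and "0 < s" and "x \<le> x'" and "y \<le> y'"
    and "f \<in> borel_measurable M" and "g \<in> borel_measurable M"
    and "{\<omega>\<in>space M. P \<omega>} \<in> sets M"
  shows "rect_volume (\<lambda>a b. measure M {\<omega>\<in>space M. P \<omega> \<and> f \<omega> \<le> s * a \<and> g \<omega> \<le> s * b} / s) x x' y y'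
       = measure M {\<omega>\<in>space M. P \<omega> \<and> s * x < f \<omega> \<and> f \<omega> \<le> s * x'
                                \<and> s * y < g \<omega> \<and> g \<omega> \<le> s * y'} / s"
proof -
  have "rect_volume (\<lambda>a b. measure M {\<omega>\<in>space M. P \<omega> \<and> f \<omega> \<le> s * a \<and> g \<omega> \<le> s * b} / s) x x' y y'
      = rect_volume (\<lambda>a b. measure M {\<omega>\<in>space M. P \<omega> \<and> f \<omega> \<le> a \<and> g \<omega> \<le> b})
          (s * x) (s * x') (s * y) (s * y') / s"
    unfolding rect_volume_def by (simp add: diff_divide_distrib)
  also have "\<dots> = measure M {\<omega>\<in>space M. P \<omega> \<and> s * x < f \<omega> \<and> f \<omega> \<le> s * x'
                                \<and> s * y < g \<omega> \<and> g \<omega> \<le> s * y'} / s"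
    using assms by (subst rect_volume_measure) simp_all
  finally show ?thesis .
qed

lemma tendsto_nonneg_le:
  fixes f g :: "'a \<Rightarrow> real"
  assumes "(f \<longlongrightarrow> a) F" and "(g \<longlongrightarrow> b) F" and "F \<noteq> bot"
    and "\<forall>\<^sub>F x in F. 0 \<le> f x \<and> f x \<le> g x"
  shows "0 \<le> a \<and> a \<le> b"
proof
  show "0 \<le> a"
    using assms(4) by (intro tendsto_lowerbound[OF assms(1) _ assms(3)]) (auto elim: eventually_mono)
  show "a \<le> b"
    using assms(4) by (intro tendsto_le[OF assms(3,2,1)]) (auto elim: eventually_mono)
qed

lemma all_less_split_first_two:
  fixes d :: nat
  assumes "2 \<le> d"
  shows "(\<forall>i<d. P i) \<longleftrightarrow> P 0 \<and> P 1 \<and> (\<forall>i\<in>{2..<d}. P i)"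
  using assms less_2_cases_iff by (auto, metis atLeastLessThan_iff not_le)

lemma tail_copula_rect_volume_bounds:
  fixes M :: "'a measure" and V :: "nat \<Rightarrow> 'a \<Rightarrow> real"
    and R :: "(nat \<Rightarrow> real) \<Rightarrow> real" and R2 :: "real \<Rightarrow> real \<Rightarrow> real"
  assumes "prob_space M" and "2 \<le> d" and "uniform_margins M d V"
    and "is_tail_copula_of M d V R" and "is_biv_margin_of M V R2"
    and "nonneg_point d w" and "0 \<le> x" "x \<le> x'" and "0 \<le> y" "y \<le> y'"
  shows "0 \<le> rect_volume (\<lambda>a b. R (w(0 := a, 1 := b))) x x' y y'
       \<and> rect_volume (\<lambda>a b. R (w(0 := a, 1 := b))) x x' y y' \<le> rect_volume R2 x x' y y'"
proof -
  interpret prob_space M by fact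
  have V_meas: "V i \<in> borel_measurable M" if "i < d" for i
    using assms(3) that unfolding uniform_margins_def by blast
  then have V01_meas: "V 0 \<in> borel_measurable M" "V 1 \<in> borel_measurable M"
    using assms(2) by auto
  define Q where "Q s \<omega> \<longleftrightarrow> (\<forall>i\<in>{2..<d}. V i \<omega> \<le> s * w i)" for s \<omega>
  define E where "E P a b = measure M {\<omega>\<in>space M. P \<omega> \<and> V 0 \<omega> \<le> a \<and> V 1 \<omega> \<le> b}"
    for P :: "'a \<Rightarrow> bool" and a b
  have Q_meas: "{\<omega>\<in>space M. Q s \<omega>} \<in> sets M" for s
    unfolding Q_def by (rule sets.sets_Collect_finite_All) (use V_meas in measurable)
  have tail: "((\<lambda>s. E (Q s) (s * a) (s * b) / s) \<longlongrightarrow> R (w(0 := a, 1 := b))) (at_right 0)"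
    if "0 \<le> a" "0 \<le> b" for a b
  proof -
    have "nonneg_point d (w(0 := a, 1 := b))"
      using assms(6) that unfolding nonneg_point_def by auto
    then have "((\<lambda>s. measure M {\<omega>\<in>space M. \<forall>i<d. V i \<omega> \<le> s * (w(0 := a, 1 := b)) i} / s)
        \<longlongrightarrow> R (w(0 := a, 1 := b))) (at_right 0)"
      using assms(4) unfolding is_tail_copula_of_def by blast
    moreover have box: "{\<omega>\<in>space M. \<forall>i<d. V i \<omega> \<le> s * (w(0 := a, 1 := b)) i}
        = {\<omega>\<in>space M. Q s \<omega> \<and> V 0 \<omega> \<le> s * a \<and> V 1 \<omega> \<le> s * b}" for s
      unfolding all_less_split_first_two[OF assms(2)] Q_def by auto
    ultimately show ?thesis
      unfolding E_def by simp
  qed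
  have biv: "((\<lambda>s. E (\<lambda>_. True) (s * a) (s * b) / s) \<longlongrightarrow> R2 a b) (at_right 0)"
    if "0 \<le> a" "0 \<le> b" for a b
    using assms(5) that unfolding is_biv_margin_of_def E_def by simp
  have "((\<lambda>s. rect_volume (\<lambda>a b. E (Q s) (s * a) (s * b) / s) x x' y y')
      \<longlongrightarrow> rect_volume (\<lambda>a b. R (w(0 := a, 1 := b))) x x' y y') (at_right 0)"
    unfolding rect_volume_def using assms(7-10) by (intro tendsto_intros tail) auto
  moreover have "((\<lambda>s. rect_volume (\<lambda>a b. E (\<lambda>_. True) (s * a) (s * b) / s) x x' y y')
      \<longlongrightarrow> rect_volume R2 x x' y y') (at_right 0)"
    unfolding rect_volume_def using assms(7-10) by (intro tendsto_intros biv) auto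
  moreover have "\<forall>\<^sub>F s in at_right 0.
      0 \<le> rect_volume (\<lambda>a b. E (Q s) (s * a) (s * b) / s) x x' y y'
      \<and> rect_volume (\<lambda>a b. E (Q s) (s * a) (s * b) / s) x x' y y'
        \<le> rect_volume (\<lambda>a b. E (\<lambda>_. True) (s * a) (s * b) / s) x x' y y'"
    using eventually_at_right_less
  proof eventually_elim
    case (elim s)
    note scaled = rect_volume_measure_scaled[OF finite_measure_axioms elim assms(8,10) V01_meas]
    have True_meas: "{\<omega>\<in>space M. True} \<in> sets M"
      by simp
    have "{\<omega>\<in>space M. s * x < V 0 \<omega> \<and> V 0 \<omega> \<le> s * x'
                            \<and> s * y < V 1 \<omega> \<and> V 1 \<omega> \<le> s * y'} \<in> sets M"
      using V01_meas by measurable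
    then show ?case
      unfolding E_def scaled[OF Q_meas] scaled[OF True_meas]
      using elim by (auto intro!: divide_right_mono finite_measure_mono)
  qed
  ultimately show ?thesis
    by (rule tendsto_nonneg_le[OF _ _ trivial_limit_at_right_real])
qed

lemma has_rpartial_tendsto_rpartial:
  assumes "has_rpartial R i u"
  shows "((\<lambda>h. (R (u(i := u i + h)) - R u) / h) \<longlongrightarrow> rpartial R i u) (at_right 0)"
  using assms tendsto_Lim[OF trivial_limit_at_right_real]
  unfolding has_rpartial_def rpartial_def by blast

lemma rect_volume_div_width_tendsto:
  assumes "((\<lambda>h. (F (x + h) b' - F x b') / h) \<longlongrightarrow> L') (at_right 0)"
    and "((\<lambda>h. (F (x + h) b - F x b) / h) \<longlongrightarrow> L) (at_right 0)"
  shows "((\<lambda>h. rect_volume F x (x + h) b b' / h) \<longlongrightarrow> L' - L) (at_right 0)"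
  using tendsto_diff[OF assms] by (simp add: rect_volume_def diff_divide_distrib)

lemma right_derivative_diff_bounds_of_rect_volume_bounds:
  assumes "((\<lambda>h. (F (x + h) b' - F x b') / h) \<longlongrightarrow> A') (at_right 0)"
    and "((\<lambda>h. (F (x + h) b - F x b) / h) \<longlongrightarrow> A) (at_right 0)"
    and "((\<lambda>h. (G (x + h) b' - G x b') / h) \<longlongrightarrow> B') (at_right 0)"
    and "((\<lambda>h. (G (x + h) b - G x b) / h) \<longlongrightarrow> B) (at_right 0)"
    and "\<And>h. 0 < h \<Longrightarrow> 0 \<le> rect_volume F x (x + h) b b'
                        \<and> rect_volume F x (x + h) b b' \<le> rect_volume G x (x + h) b b'"
  shows "0 \<le> A' - A \<and> A' - A \<le> B' - B"
proof (rule tendsto_nonneg_le)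
  show "((\<lambda>h. rect_volume F x (x + h) b b' / h) \<longlongrightarrow> A' - A) (at_right 0)"
    using assms(1,2) by (rule rect_volume_div_width_tendsto)
  show "((\<lambda>h. rect_volume G x (x + h) b b' / h) \<longlongrightarrow> B' - B) (at_right 0)"
    using assms(3,4) by (rule rect_volume_div_width_tendsto)
  show "\<forall>\<^sub>F h in at_right 0. 0 \<le> rect_volume F x (x + h) b b' / h
      \<and> rect_volume F x (x + h) b b' / h \<le> rect_volume G x (x + h) b b' / h"
    using eventually_at_right_less by eventually_elim (use assms(5) in \<open>auto intro: divide_right_mono\<close>)
qed (fact trivial_limit_at_right_real)

theorem lemmaA7:
  fixes M :: "'a measure" and d :: nat and V :: "nat \<Rightarrow> 'a \<Rightarrow> real"
    and R :: "(nat \<Rightarrow> real) \<Rightarrow> real" and R2 :: "real \<Rightarrow> real \<Rightarrow> real"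
    and w :: "nat \<Rightarrow> real" and g :: real
  assumes "prob_space M" and "d \<ge> 2"
    and "uniform_margins M d V"
    and "is_tail_copula_of M d V R"
    and "is_biv_margin_of M V R2"
    and "\<forall>i<d. \<forall>u. nonneg_point d u \<longrightarrow> has_rpartial R i u"
    and "\<forall>i<2. \<forall>u. nonneg_point 2 u \<longrightarrow> has_rpartial (\<lambda>v. R2 (v 0) (v 1)) i u"
    and "g > 0" and "nonneg_point d w"
  shows "0 \<le> rpartial R 0 (w(1 := w 1 + g)) - rpartial R 0 w
       \<and> rpartial R 0 (w(1 := w 1 + g)) - rpartial R 0 w
         \<le> rpartial (\<lambda>v. R2 (v 0) (v 1)) 0 ((\<lambda>_. 0)(0 := w 0, 1 := w 1 + g))
           - rpartial (\<lambda>v. R2 (v 0) (v 1)) 0 ((\<lambda>_. 0)(0 := w 0, 1 := w 1))"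
proof -
  define F where "F a b = R (w(0 := a, 1 := b))" for a b
  have w01: "0 \<le> w 0" "0 \<le> w 1"
    using assms(2,9) unfolding nonneg_point_def by auto
  have dF: "((\<lambda>h. (F (w 0 + h) b - F (w 0) b) / h) \<longlongrightarrow> rpartial R 0 (w(1 := b))) (at_right 0)"
    if "0 \<le> b" for b
  proof -
    have "nonneg_point d (w(1 := b))"
      using assms(9) that unfolding nonneg_point_def by auto
    then have "has_rpartial R 0 (w(1 := b))"
      using assms(2,6) by simp
    from has_rpartial_tendsto_rpartial[OF this] show ?thesis
      unfolding F_def by (simp add: fun_upd_twist)
  qed
  have dR2: "((\<lambda>h. (R2 (w 0 + h) b - R2 (w 0) b) / h)
      \<longlongrightarrow> rpartial (\<lambda>v. R2 (v 0) (v 1)) 0 ((\<lambda>_. 0)(0 := w 0, 1 := b))) (at_right 0)"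
    if "0 \<le> b" for b
  proof -
    have "nonneg_point 2 ((\<lambda>_. 0)(0 := w 0, 1 := b))"
      using w01 that unfolding nonneg_point_def by auto
    then show ?thesis
      using has_rpartial_tendsto_rpartial assms(7) by fastforce
  qed
  have "0 \<le> w 1 + g"
    using w01 assms(8) by simp
  from right_derivative_diff_bounds_of_rect_volume_bounds[OF dF[OF this] dF[OF w01(2)]
      dR2[OF this] dR2[OF w01(2)]]
  show ?thesis
    using tail_copula_rect_volume_bounds[OF assms(1-5,9)] w01 assms(8)
    unfolding F_def by simp
qed

end
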